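(* Let $a,b$ be positive integers with $\gcd(a,b)=1$. For all $\pi\in\mathcal{D}_{b,-a}(a,b)$, $$\mathrm{word}(\mathrm{zeta}(\pi))=\mathrm{sw}^+_{b,-a}\circ\mathrm{rev}(\mathrm{word}(\pi)).$$
   Context: Partitions are drawn in English convention in the first quadrant; a partition with at most $a$ parts, each at most $b$, fits in the rectangle $[0,b]\times[0,a]$, and its diagram consists of unit squares above and to the left of its frontier, a lattice path from $(0,0)$ to $(b,a)$ with unit north (N) and east (E) steps. $\mathrm{word}(\pi)\in\{\mathrm{N},\mathrm{E}\}^*$ is the word of this frontier path (equivalently, the parts of $\pi$ are, for each N of the word, the number of E's preceding it). $\mathrm{rev}$ reverses a word. The $(b,-a)$-level of a lattice point $(x,y)$ is $by-ax$; a unit lattice square $[x,x+1]\times[y,y+1]$ has the level of its southeast corner, $by-a(x+1)$. $\mathcal{D}_{b,-a}(a,b)$ is the set of partitions fitting in the $a\times b$ rectangle whose frontier path visits only lattice points of nonnegative level (i.e. stays weakly above the line $by=ax$). For a word $w=w_1\cdots w_n$, the levels are $l_0=0$, $l_i=l_{i-1}+b$ if $w_i=\mathrm{N}$, $l_i=l_{i-1}-a$ if $w_i=\mathrm{E}$. The sweep map $\mathrm{sw}^+_{b,-a}(w)$ is obtained by: for $k=0,-1,-2,\ldots$ and then $k=\ldots,3,2,1$ (all nonpositive values in decreasing order, then all positive values in decreasing order), scan $w$ from left to right and append each letter $w_i$ ($i\ge1$) with $l_i=k$. The hook of a cell $c$ of a partition diagram consists of $c$, the cells below $c$ in its column and the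 cells to the right of $c$ in its row; its hook-length $h(c)$ is the number of cells in the hook. The map $\mathrm{zeta}$: given $\pi\in\mathcal{D}_{b,-a}(a,b)$, consider the levels of all unit lattice squares lying above the line $by=ax$ and below the frontier path of $\pi$ (i.e. in the region bounded by the path and the segment from $(0,0)$ to $(b,a)$); these are distinct positive integers. Let $\nu=f(\pi)$ be the unique partition whose first-column cells have exactly these hook-lengths. Then $\rho=\mathrm{zeta}(\pi)$ has one row for each row of $\nu$ whose first-column hook-length equals the level of a square lying directly east of a north step of the frontier path of $\pi$ (the square $[x,x+1]\times[y,y+1]$ for a north step from $(x,y)$ to $(x,y+1)$), and the length of that row of $\rho$ is the number of cells in the corresponding row of $\nu$ with hook-length at most $b$. $\mathrm{word}(\rho)$ is taken for $\rho$ regarded as fitting in the $a\times b$ rectangle. *)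

theory Defs
  imports Main
begin

datatype step = N | E

definition countN :: "step list \<Rightarrow> nat" where
  "countN u = length (filter (\<lambda>s. s = N) u)"

definition countE :: "step list \<Rightarrow> nat" where
  "countE u = length (filter (\<lambda>s. s = E) u)"

definition is_partition :: "nat list \<Rightarrow> bool" where
  "is_partition lam \<longleftrightarrow> sorted_wrt (\<ge>) lam \<and> (\<forall>p\<in>set lam. 0 < p)"

definition fits :: "nat \<Rightarrow> nat \<Rightarrow> nat list \<Rightarrow> bool" where
  "fits a b lam \<longleftrightarrow> length lam \<le> a \<and> (\<forall>p\<in>set lam. p \<le> b)"

text \<open>Frontier word: the increasing list mu (parts padded by zeros, read bottom to top)
  gives, for the k-th north step, the number of east steps preceding it.\<close>
fun word_aux :: "nat \<Rightarrow> nat list \<Rightarrow> step list" where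
  "word_aux c [] = []"
| "word_aux c (m # ms) = replicate (m - c) E @ [N] @ word_aux m ms"

definition word :: "nat \<Rightarrow> nat \<Rightarrow> nat list \<Rightarrow> step list" where
  "word a b lam = (let \<mu> = replicate (a - length lam) 0 @ rev lam
                  in word_aux 0 \<mu> @ replicate (b - last (0 # \<mu>)) E)"

definition ptlev :: "nat \<Rightarrow> nat \<Rightarrow> nat \<Rightarrow> nat \<Rightarrow> int" where
  "ptlev a b x y = int b * int y - int a * int x"

definition wlev :: "nat \<Rightarrow> nat \<Rightarrow> step list \<Rightarrow> int" where
  "wlev a b u = ptlev a b (countE u) (countN u)"

text \<open>Level of the unit square [x,x+1]x[y,y+1]: level of its southeast corner.\<close>
definition sqlev :: "nat \<Rightarrow> nat \<Rightarrow> nat \<Rightarrow> nat \<Rightarrow> int" where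
  "sqlev a b x y = ptlev a b (x + 1) y"

definition Dset :: "nat \<Rightarrow> nat \<Rightarrow> nat list set" where
  "Dset a b = {lam. is_partition lam \<and> fits a b lam \<and>
                   (\<forall>i \<le> length (word a b lam). 0 \<le> wlev a b (take i (word a b lam)))}"

definition sweep :: "nat \<Rightarrow> nat \<Rightarrow> step list \<Rightarrow> step list" where
  "sweep a b w =
    (let n = length w;
         l = (\<lambda>i. wlev a b (take i w));
         ls = map l [1..<n+1];
         lo = Min (insert 0 (set ls));
         hi = Max (insert 0 (set ls))
     in concat (map (\<lambda>k. [w ! i. i \<leftarrow> [0..<n], l (i+1) = k])
                    (rev [lo..0] @ rev [1..hi])))"

text \<open>Rows indexed from 0 (top), columns from 0; cell (i,j) exists iff j < lambda!i.\<close>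
definition hook :: "nat list \<Rightarrow> nat \<Rightarrow> nat \<Rightarrow> nat" where
  "hook \<nu> i j = (\<nu> ! i - j) + length (filter (\<lambda>p. j < p) (drop (i+1) \<nu>))"

definition first_col_hooks :: "nat list \<Rightarrow> nat set" where
  "first_col_hooks \<nu> = {hook \<nu> i 0 | i. i < length \<nu>}"

definition nsteps :: "step list \<Rightarrow> (nat \<times> nat) set" where
  "nsteps w = {(countE (take i w), countN (take i w)) | i. i < length w \<and> w ! i = N}"

text \<open>Squares above the line by = ax and below the frontier path: in row y the square
  [x,x+1]x[y,y+1] lies weakly right of the north step of that row.\<close>
definition region_levels :: "nat \<Rightarrow> nat \<Rightarrow> nat list \<Rightarrow> int set" where
  "region_levels a b \<pi> = {sqlev a b x y | x y. x < b \<and> y < a \<and> 0 < sqlev a b x y \<and>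
                         (\<exists>x'. (x', y) \<in> nsteps (word a b \<pi>) \<and> x' \<le> x)}"

definition east_levels :: "nat \<Rightarrow> nat \<Rightarrow> nat list \<Rightarrow> int set" where
  "east_levels a b \<pi> = {sqlev a b x y | x y. (x, y) \<in> nsteps (word a b \<pi>)}"

definition f_map :: "nat \<Rightarrow> nat \<Rightarrow> nat list \<Rightarrow> nat list" where
  "f_map a b \<pi> = (THE \<nu>. is_partition \<nu> \<and> int ` first_col_hooks \<nu> = region_levels a b \<pi>)"

definition zeta :: "nat \<Rightarrow> nat \<Rightarrow> nat list \<Rightarrow> nat list" where
  "zeta a b \<pi> = (let \<nu> = f_map a b \<pi> in
     map (\<lambda>i. card {j. j < \<nu> ! i \<and> hook \<nu> i j \<le> b})
         (filter (\<lambda>i. int (hook \<nu> i 0) \<in> east_levels a b \<pi>) [0..<length \<nu>]))"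

end

theory Submission
  imports Defs
begin

text \<open>Since \<open>gcd a b = 1\<close>, the lattice points of the path have pairwise distinct levels, so the
  sweep of the reversed word lists the steps of the path in increasing order of the levels of their
  starting points; its profile records, for each north step, the number of east steps of smaller
  level. On the other side, the levels of the squares north of the east steps form a complete
  system of residues modulo \<open>b\<close> containing \<open>0\<close>, and the region below the path consists of
  their positive translates by negative multiples of \<open>b\<close>. This region is the first-column hook
  set of \<open>\<nu> = f(\<pi>)\<close>. The cells of hook length at most \<open>b\<close> in the row of first hook \<open>h\<close>
  correspond to the gaps of that set in the window \<open>[h - b, h)\<close>, and by the residue property
  there are as many of them as east squares of level below \<open>h\<close>. Hence the rows of \<open>zeta(\<pi>)\<close>
  reproduce the profile of the sweep.\<close>

lemma countE_simps [simp]: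
  "countE [] = 0" "countE (E # u) = Suc (countE u)" "countE (N # u) = countE u"
  by (auto simp: countE_def)

lemma countN_simps [simp]:
  "countN [] = 0" "countN (N # u) = Suc (countN u)" "countN (E # u) = countN u"
  by (auto simp: countN_def)

lemma countE_append [simp]: "countE (u @ v) = countE u + countE v"
  by (simp add: countE_def)

lemma countN_append [simp]: "countN (u @ v) = countN u + countN v"
  by (simp add: countN_def)

lemma countE_rev [simp]: "countE (rev u) = countE u"
  by (simp add: countE_def rev_filter[symmetric])

lemma countN_rev [simp]: "countN (rev u) = countN u"
  by (simp add: countN_def rev_filter[symmetric])

lemma countN_add_countE: "countN u + countE u = length u"
proof (induction u)
  case (Cons s u)
  then show ?case by (cases s) simp_all
qed simp

lemma length_filter_take_Suc:
  "i < length u \<Longrightarrow>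
   length (filter P (take (Suc i) u)) = length (filter P (take i u)) + (if P (u ! i) then 1 else 0)"
  by (simp add: take_Suc_conv_app_nth)

lemma length_filter_take_mono:
  assumes "i \<le> j"
  shows "length (filter P (take i u)) \<le> length (filter P (take j u))"
proof -
  have "take j u = take i u @ take (j - i) (drop i u)"
    using assms by (metis le_add_diff_inverse take_add)
  then show ?thesis by simp
qed

lemma length_filter_take_strict_mono:
  assumes "i < j" "j \<le> length u" "P (u ! i)"
  shows "length (filter P (take i u)) < length (filter P (take j u))"
proof -
  have "length (filter P (take (Suc i) u)) = Suc (length (filter P (take i u)))"
    using assms length_filter_take_Suc[of i u P] by simp
  moreover have "length (filter P (take (Suc i) u)) \<le> length (filter P (take j u))"
    using assms by (intro length_filter_take_mono) simp
  ultimately show ?thesis by simp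
qed

lemma ex_length_filter_take_eq:
  "c < length (filter P u) \<Longrightarrow> \<exists>i<length u. P (u ! i) \<and> length (filter P (take i u)) = c"
proof (induction u arbitrary: c)
  case (Cons x u)
  show ?case
  proof (cases "P x \<and> c = 0")
    case True
    then show ?thesis by (intro exI[of _ 0]) simp
  next
    case False
    then have "(if P x then c - 1 else c) < length (filter P u)"
      using Cons.prems by (auto split: if_splits)
    then obtain i where "i < length u" "P (u ! i)"
        "length (filter P (take i u)) = (if P x then c - 1 else c)"
      using Cons.IH by blast
    then show ?thesis using False by (intro exI[of _ "Suc i"]) auto
  qed
qed simp

lemma countN_take_Suc:
  "i < length u \<Longrightarrow> countN (take (Suc i) u) = countN (take i u) + (if u ! i = N then 1 else 0)"
  unfolding countN_def by (rule length_filter_take_Suc)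

lemma countE_take_Suc:
  "i < length u \<Longrightarrow> countE (take (Suc i) u) = countE (take i u) + (if u ! i = E then 1 else 0)"
  unfolding countE_def by (rule length_filter_take_Suc)

lemma countN_take_mono: "i \<le> j \<Longrightarrow> countN (take i u) \<le> countN (take j u)"
  unfolding countN_def by (rule length_filter_take_mono)

lemma countE_take_mono: "i \<le> j \<Longrightarrow> countE (take i u) \<le> countE (take j u)"
  unfolding countE_def by (rule length_filter_take_mono)

lemma countN_take_strict_mono:
  "i < j \<Longrightarrow> j \<le> length u \<Longrightarrow> u ! i = N \<Longrightarrow> countN (take i u) < countN (take j u)"
  unfolding countN_def by (rule length_filter_take_strict_mono)

lemma countE_take_strict_mono:
  "i < j \<Longrightarrow> j \<le> length u \<Longrightarrow> u ! i = E \<Longrightarrow> countE (take i u) < countE (take j u)"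
  unfolding countE_def by (rule length_filter_take_strict_mono)

lemma ex_countN_take_eq: "c < countN u \<Longrightarrow> \<exists>i<length u. u ! i = N \<and> countN (take i u) = c"
  unfolding countN_def by (rule ex_length_filter_take_eq)

lemma ex_countE_take_eq: "c < countE u \<Longrightarrow> \<exists>i<length u. u ! i = E \<and> countE (take i u) = c"
  unfolding countE_def by (rule ex_length_filter_take_eq)

lemma countN_take_le: "countN (take i u) \<le> countN u"
  by (metis append_take_drop_id countN_append le_add1)

lemma countE_take_le: "countE (take i u) \<le> countE u"
  by (metis append_take_drop_id countE_append le_add1)

lemma countN_take_less: "i < length u \<Longrightarrow> u ! i = N \<Longrightarrow> countN (take i u) < countN u"
  using countN_take_strict_mono[of i "length u" u] by simp

lemma countE_take_less: "i < length u \<Longrightarrow> u ! i = E \<Longrightarrow> countE (take i u) < countE u"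
  using countE_take_strict_mono[of i "length u" u] by simp

section \<open>Recovering a partition from its frontier word\<close>

text \<open>A left inverse of \<open>word_aux\<close>.\<close>

fun word_profile :: "nat \<Rightarrow> step list \<Rightarrow> nat list" where
  "word_profile c [] = []"
| "word_profile c (E # u) = word_profile (Suc c) u"
| "word_profile c (N # u) = c # word_profile c u"

lemma word_profile_ge: "x \<in> set (word_profile c u) \<Longrightarrow> c \<le> x"
  by (induction c u rule: word_profile.induct) fastforce+

lemma word_aux_Cons_less: "c < m \<Longrightarrow> word_aux c (m # ms) = E # word_aux (Suc c) (m # ms)"
proof -
  assume "c < m"
  then have "m - c = Suc (m - Suc c)" by simp
  then show ?thesis by simp
qed

lemma word_aux_word_profile:
  "word_aux c (word_profile c u) @ replicate (c + countE u - last (c # word_profile c u)) E = u"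
proof (induction c u rule: word_profile.induct)
  case (2 c u)
  show ?case
  proof (cases "word_profile (Suc c) u")
    case (Cons m ms)
    then have "c < m" using word_profile_ge[of m "Suc c" u] by simp
    then show ?thesis using 2 Cons word_aux_Cons_less[of c m ms] by simp
  qed (use 2 in simp)
next
  case (3 c u)
  then show ?case by (cases "word_profile c u") auto
qed simp

lemma word_profile_map:
  fixes xs :: "'a::linorder list"
  assumes "sorted_wrt (<) xs"
  shows "word_profile c (map f xs) =
    map (\<lambda>x. c + card {y \<in> set xs. f y = E \<and> y < x}) (filter (\<lambda>x. f x = N) xs)"
  using assms
proof (induction xs arbitrary: c)
  case (Cons x xs)
  have gt: "\<forall>y\<in>set xs. x < y" and sorted: "sorted_wrt (<) xs" using Cons.prems by simp_all
  show ?case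
  proof (cases "f x")
    case N
    have "{y \<in> set (x # xs). f y = E \<and> y < x} = {}" using gt N by auto
    moreover have "{y \<in> set (x # xs). f y = E \<and> y < z} = {y \<in> set xs. f y = E \<and> y < z}" for z
      using N by auto
    ultimately show ?thesis using N Cons.IH[OF sorted, of c] by (auto intro!: map_cong)
  next
    case E
    have "{y \<in> set (x # xs). f y = E \<and> y < z} = insert x {y \<in> set xs. f y = E \<and> y < z}"
      if "z \<in> set xs" for z
      using E gt that by auto
    moreover have "x \<notin> {y \<in> set xs. f y = E \<and> y < z}" for z using gt by auto
    ultimately show ?thesis using E Cons.IH[OF sorted, of "Suc c"] by (auto intro!: map_cong)
  qed
qed simp

lemma word_aux_counts:
  "sorted (c # \<mu>) \<Longrightarrow> countN (word_aux c \<mu>) = length \<mu> \<and> countE (word_aux c \<mu>) = last (c # \<mu>) - c"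
proof (induction \<mu> arbitrary: c)
  case (Cons m \<mu>)
  have "sorted (m # \<mu>)" "c \<le> m" using Cons.prems by simp_all
  moreover have "m \<le> last (m # \<mu>)"
    using \<open>sorted (m # \<mu>)\<close> by (metis last_in_set list.discI sorted_simps(2) order.refl set_ConsD)
  ultimately show ?case using Cons.IH by (simp add: countE_def countN_def)
qed simp

lemma countN_countE_word:
  assumes "is_partition lam" "fits a b lam"
  shows "countN (word a b lam) = a \<and> countE (word a b lam) = b"
proof -
  define \<mu> where "\<mu> = replicate (a - length lam) 0 @ rev lam"
  have "sorted (0 # \<mu>)"
    using assms(1) unfolding is_partition_def \<mu>_def by (auto simp: sorted_append sorted_wrt_rev)
  moreover have "length \<mu> = a" and "last (0 # \<mu>) \<le> b"
    using assms(2) last_in_set[of "0 # \<mu>"] unfolding \<mu>_def fits_def by auto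
  moreover have "word a b lam = word_aux 0 \<mu> @ replicate (b - last (0 # \<mu>)) E"
    unfolding word_def \<mu>_def Let_def by simp
  ultimately show ?thesis using word_aux_counts[of 0 \<mu>] by (simp add: countN_def countE_def)
qed

lemma concat_map_if_singleton:
  "concat (map (\<lambda>k. if P k then [f k] else []) ks) = map f (filter P ks)"
  by (induction ks) auto

lemma filter_upt_eq_singleton:
  assumes "x < n" "\<And>i. i < n \<Longrightarrow> P i \<longleftrightarrow> i = x"
  shows "filter P [0..<n] = [x]"
proof -
  have "distinct (filter P [0..<n])" and set: "set (filter P [0..<n]) = {x}"
    using assms by auto
  then have "length (filter P [0..<n]) = 1" using distinct_card by fastforce
  then show ?thesis using set by (cases "filter P [0..<n]") auto
qed

lemma sorted_list_of_set_eqI: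
  "finite A \<Longrightarrow> sorted_wrt (<) xs \<Longrightarrow> set xs = A \<Longrightarrow> sorted_list_of_set A = xs"
  using sorted_list_of_set.idem_if_sorted_distinct strict_sorted_iff by blast

lemma sorted_list_of_set_image_strict_mono:
  assumes "finite A" and "\<And>x y. x \<in> A \<Longrightarrow> y \<in> A \<Longrightarrow> x < y \<Longrightarrow> f x < f y"
  shows "sorted_list_of_set (f ` A) = map f (sorted_list_of_set A)"
proof (rule sorted_list_of_set_eqI)
  have "sorted_wrt (\<lambda>x y. f x < f y) (sorted_list_of_set A)"
    using sorted_wrt_mono_rel[of "sorted_list_of_set A" "(<)"] assms by auto
  then show "sorted_wrt (<) (map f (sorted_list_of_set A))" by (simp add: sorted_wrt_map)
qed (use assms in simp_all)

section \<open>Levels of a coprime Dyck path and the sweep map\<close>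

locale coprime_dyck_word =
  fixes a b :: nat and w :: "step list"
  assumes a_pos: "0 < a" and b_pos: "0 < b" and coprime: "coprime a b"
    and countN_w: "countN w = a" and countE_w: "countE w = b"
    and wlev_nonneg: "\<forall>i \<le> length w. 0 \<le> wlev a b (take i w)"
begin

definition lev :: "nat \<Rightarrow> int" where
  "lev j = wlev a b (take j w)"

lemma length_w: "length w = a + b"
  using countN_add_countE[of w] countN_w countE_w by simp

lemma lev_eq: "lev j = int b * int (countN (take j w)) - int a * int (countE (take j w))"
  unfolding lev_def wlev_def ptlev_def by simp

lemma lev_nonneg: "j \<le> length w \<Longrightarrow> 0 \<le> lev j"
  using wlev_nonneg unfolding lev_def by simp

lemma lev_Suc: "j < length w \<Longrightarrow> lev (Suc j) = lev j + (if w ! j = N then int b else - int a)"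
  using countN_take_Suc[of j w] countE_take_Suc[of j w]
  by (cases "w ! j") (simp_all add: lev_eq algebra_simps)

lemma lev_ge_if_E: "j < length w \<Longrightarrow> w ! j = E \<Longrightarrow> int a \<le> lev j"
  using lev_Suc[of j] lev_nonneg[of "Suc j"] by simp

text \<open>Since \<open>a\<close> and \<open>b\<close> are coprime, two points of the path at the same level differ by a multiple
  of \<open>(b, a)\<close>; inside the rectangle this forces them to coincide or to be the two endpoints.\<close>

lemma lev_inj_of_countN_le:
  assumes i: "i < length w" and j: "j < length w" and eq: "lev i = lev j"
    and le: "countN (take j w) \<le> countN (take i w)"
  shows "i = j"
proof -
  define p q r s where "p = countN (take i w)" and "q = countN (take j w)"
    and "r = countE (take i w)" and "s = countE (take j w)"
  have pq: "q \<le> p" using le p_def q_def by simp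
  have e: "int b * (int p - int q) = int a * (int r - int s)"
    using eq unfolding lev_eq p_def q_def r_def s_def by (simp add: algebra_simps)
  moreover have "0 \<le> int b * (int p - int q)" using pq by simp
  ultimately have "0 \<le> int a * (int r - int s)" by simp
  then have rs: "s \<le> r" using a_pos by (simp add: zero_le_mult_iff)
  have "int (b * (p - q)) = int (a * (r - s))" using e pq rs by (simp add: of_nat_diff)
  then have e': "b * (p - q) = a * (r - s)" by (simp only: of_nat_eq_iff)
  then have "a dvd p - q" using coprime coprime_dvd_mult_right_iff[of a b "p - q"] by simp
  moreover have "p - q \<le> a" using p_def countN_take_le[of i w] countN_w by simp
  ultimately have "p - q = 0 \<or> p - q = a" by (auto dest: dvd_imp_le)
  moreover have "p + r = i" "q + s = j"
    using countN_add_countE[of "take i w"] countN_add_countE[of "take j w"] i j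
    unfolding p_def q_def r_def s_def by simp_all
  moreover have "p \<le> a" "r \<le> b"
    using countN_take_le[of i w] countE_take_le[of i w] countN_w countE_w p_def r_def by simp_all
  ultimately show ?thesis
  proof (elim disjE)
    assume "p - q = a"
    then have "p = a" "r = b" using e' a_pos rs \<open>p \<le> a\<close> \<open>r \<le> b\<close> by (simp_all add: mult.commute)
    then show ?thesis using \<open>p + r = i\<close> i length_w by simp
  qed (use e' a_pos pq rs in simp)
qed

lemma lev_inj: "i < length w \<Longrightarrow> j < length w \<Longrightarrow> lev i = lev j \<Longrightarrow> i = j"
  using lev_inj_of_countN_le by (metis nat_le_linear)

definition levels :: "int set" where
  "levels = lev ` {..<length w}"

definition letter :: "int \<Rightarrow> step" where
  "letter l = w ! (THE j. j < length w \<and> lev j = l)"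

lemma letter_lev: "j < length w \<Longrightarrow> letter (lev j) = w ! j"
proof -
  assume j: "j < length w"
  have "(THE j'. j' < length w \<and> lev j' = lev j) = j"
    using j lev_inj by (intro the_equality) auto
  then show ?thesis unfolding letter_def by simp
qed

lemma finite_levels [simp]: "finite levels"
  unfolding levels_def by simp

lemma wlev_take_rev: "i < length w \<Longrightarrow> wlev a b (take (Suc i) (rev w)) = - lev (length w - Suc i)"
proof -
  assume i: "i < length w"
  define k where "k = length w - Suc i"
  have "take (Suc i) (rev w) = rev (drop k w)" using i unfolding k_def by (simp add: take_rev)
  moreover have "countN (drop k w) = a - countN (take k w)" "countE (drop k w) = b - countE (take k w)"
    using countN_append[of "take k w" "drop k w"] countE_append[of "take k w" "drop k w"]
      countN_w countE_w by simp_all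
  ultimately show ?thesis
    using countN_take_le[of k w] countE_take_le[of k w] lev_eq[of k] countN_w countE_w
    unfolding k_def[symmetric] wlev_def ptlev_def by (simp add: of_nat_diff algebra_simps)
qed

lemma set_wlev_take_rev:
  "set (map (\<lambda>i. wlev a b (take i (rev w))) [1..<length w + 1]) = uminus ` levels"
proof -
  have "set [1..<length w + 1] = Suc ` {..<length w}"
    unfolding set_upt image_Suc_lessThan by (simp add: atLeastLessThanSuc_atLeastAtMost)
  then have "set (map (\<lambda>i. wlev a b (take i (rev w))) [1..<length w + 1])
      = (\<lambda>i. - lev (length w - Suc i)) ` {..<length w}"
    using wlev_take_rev by (auto simp: image_image)
  also have "\<dots> = (\<lambda>j. - lev j) ` {..<length w}"
  proof (rule set_eqI, rule iffI)
    fix x assume "x \<in> (\<lambda>j. - lev j) ` {..<length w}"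
    then obtain j where "j < length w" "x = - lev j" by auto
    then show "x \<in> (\<lambda>i. - lev (length w - Suc i)) ` {..<length w}"
      by (intro image_eqI[of _ _ "length w - Suc j"]) auto
  qed auto
  finally show ?thesis unfolding levels_def by (simp add: image_image)
qed

lemma sweep_level_class_rev:
  "concat (map (\<lambda>i. if wlev a b (take (i + 1) (rev w)) = k then [rev w ! i] else []) [0..<length w])
   = (if - k \<in> levels then [letter (- k)] else [])"
proof (cases "- k \<in> levels")
  case True
  then obtain j where j: "j < length w" "lev j = - k" unfolding levels_def by auto
  have "filter (\<lambda>i. wlev a b (take (i + 1) (rev w)) = k) [0..<length w] = [length w - Suc j]"
  proof (rule filter_upt_eq_singleton)
    fix i assume i: "i < length w"
    show "wlev a b (take (i + 1) (rev w)) = k \<longleftrightarrow> i = length w - Suc j"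
      using wlev_take_rev[OF i] lev_inj[of "length w - Suc i" j] i j by auto
  qed (use j in simp)
  then show ?thesis
    unfolding concat_map_if_singleton using True j letter_lev[of j] by (simp add: rev_nth)
next
  case False
  then have "filter (\<lambda>i. wlev a b (take (i + 1) (rev w)) = k) [0..<length w] = []"
    using wlev_take_rev unfolding levels_def by (auto simp: filter_empty_conv)
  then show ?thesis unfolding concat_map_if_singleton using False by simp
qed

text \<open>All levels of \<open>rev w\<close> are nonpositive, so the sweep reads the letters of \<open>w\<close> in
  increasing order of the levels of their starting points.\<close>

lemma sweep_rev: "sweep a b (rev w) = map letter (sorted_list_of_set levels)"
proof -
  define ls where "ls = map (\<lambda>i. wlev a b (take i (rev w))) [1..<length w + 1]"
  define lo where "lo = Min (insert 0 (set ls))"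
  have ls: "set ls = uminus ` levels"
    unfolding ls_def by (rule set_wlev_take_rev)
  have levels_nonneg: "0 \<le> l" if "l \<in> levels" for l
    using that lev_nonneg unfolding levels_def by auto
  have lo: "- l \<in> {lo..0}" if "l \<in> levels" for l
    using that ls levels_nonneg unfolding lo_def by (auto intro: Min_le)
  define hi where "hi = Max (insert 0 (set ls))"
  have hi: "hi = 0"
    unfolding hi_def using ls levels_nonneg by (intro Max_eqI) auto
  define F where "F k = concat (map (\<lambda>i. if wlev a b (take (i + 1) (rev w)) = k then [rev w ! i] else [])
      [0..<length w])" for k
  have "sweep a b (rev w) = concat (map F (rev [lo..0] @ rev [1..hi]))"
    unfolding sweep_def Let_def F_def lo_def hi_def ls_def by simp
  also have "\<dots> = concat (map (\<lambda>k. if - k \<in> levels then [letter (- k)] else []) (rev [lo..0]))"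
    unfolding hi F_def sweep_level_class_rev by simp
  also have "\<dots> = map letter (filter (\<lambda>l. l \<in> levels) (map uminus (rev [lo..0])))"
    unfolding concat_map_if_singleton by (simp add: filter_map comp_def)
  also have "filter (\<lambda>l. l \<in> levels) (map uminus (rev [lo..0])) = sorted_list_of_set levels"
  proof (rule sym, rule sorted_list_of_set_eqI)
    show "sorted_wrt (<) (filter (\<lambda>l. l \<in> levels) (map uminus (rev [lo..0])))"
      using sorted_wrt_upto[of lo 0]
      by (intro sorted_wrt_filter) (simp add: sorted_wrt_map sorted_wrt_rev)
    show "set (filter (\<lambda>l. l \<in> levels) (map uminus (rev [lo..0]))) = levels"
      using lo by force
  qed simp
  finally show ?thesis .
qed

definition N_levels :: "int set" where
  "N_levels = {l \<in> levels. letter l = N}"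

definition E_levels :: "int set" where
  "E_levels = {l \<in> levels. letter l = E}"

definition E_below :: "int \<Rightarrow> nat" where
  "E_below l = card {l' \<in> E_levels. l' < l}"

lemma finite_N_levels [simp]: "finite N_levels"
  unfolding N_levels_def by simp

lemma finite_E_levels [simp]: "finite E_levels"
  unfolding E_levels_def by simp

lemma levels_letter_eq: "{l \<in> levels. letter l = s} = lev ` {j. j < length w \<and> w ! j = s}"
  unfolding levels_def using letter_lev by auto

lemma card_levels_letter_eq: "card {l \<in> levels. letter l = s} = length (filter (\<lambda>t. t = s) w)"
proof -
  have "inj_on lev {j. j < length w \<and> w ! j = s}"
    using lev_inj by (auto simp: inj_on_def)
  then show ?thesis
    unfolding levels_letter_eq by (simp add: card_image length_filter_conv_card)
qed

lemma card_N_levels: "card N_levels = a"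
  using card_levels_letter_eq[of N] countN_w unfolding N_levels_def countN_def by simp

lemma card_E_levels: "card E_levels = b"
  using card_levels_letter_eq[of E] countE_w unfolding E_levels_def countE_def by simp

lemma sweep_rev_eq_word:
  "sweep a b (rev w) = word_aux 0 (map E_below (sorted_list_of_set N_levels)) @
     replicate (b - last (0 # map E_below (sorted_list_of_set N_levels))) E"
proof -
  let ?T = "map letter (sorted_list_of_set levels)"
  have "countE ?T = length (filter (\<lambda>l. letter l = E) (sorted_list_of_set levels))"
    unfolding countE_def by (simp add: filter_map comp_def)
  also have "\<dots> = card E_levels"
    by (subst distinct_card[symmetric]) (simp_all add: E_levels_def)
  finally have countE_T: "countE ?T = b"
    using card_E_levels by simp
  have "filter (\<lambda>l. letter l = N) (sorted_list_of_set levels) = sorted_list_of_set N_levels"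
    by (rule sym, rule sorted_list_of_set_eqI) (auto simp: N_levels_def sorted_wrt_filter)
  then have "word_profile 0 ?T = map E_below (sorted_list_of_set N_levels)"
    unfolding word_profile_map[OF strict_sorted_list_of_set] E_below_def E_levels_def by simp
  then show ?thesis
    using word_aux_word_profile[of 0 ?T] sweep_rev countE_T by simp
qed

end

lemma length_filter_drop:
  "length (filter P (drop k xs)) = card {i. k \<le> i \<and> i < length xs \<and> P (xs ! i)}"
proof -
  have "length (filter P (drop k xs)) = card {i. i < length (drop k xs) \<and> P (drop k xs ! i)}"
    by (rule length_filter_conv_card)
  also have "\<dots> = card ((\<lambda>i. i + k) ` {i. i < length (drop k xs) \<and> P (drop k xs ! i)})"
    by (rule card_image[symmetric]) (simp add: inj_on_def)
  also have "(\<lambda>i. i + k) ` {i. i < length (drop k xs) \<and> P (drop k xs ! i)}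
      = {i. k \<le> i \<and> i < length xs \<and> P (xs ! i)}"
  proof (rule set_eqI, rule iffI)
    fix x assume "x \<in> {i. k \<le> i \<and> i < length xs \<and> P (xs ! i)}"
    then show "x \<in> (\<lambda>i. i + k) ` {i. i < length (drop k xs) \<and> P (drop k xs ! i)}"
      by (intro image_eqI[of _ _ "x - k"]) auto
  qed (auto simp: add.commute)
  finally show ?thesis .
qed

section \<open>Hook lengths\<close>

locale young_diagram =
  fixes \<nu> :: "nat list"
  assumes partition: "is_partition \<nu>"
begin

lemma nth_pos: "i < length \<nu> \<Longrightarrow> 0 < \<nu> ! i"
  using partition unfolding is_partition_def by auto

lemma nth_antimono: "i \<le> i' \<Longrightarrow> i' < length \<nu> \<Longrightarrow> \<nu> ! i' \<le> \<nu> ! i"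
  using partition unfolding is_partition_def
  by (metis le_eq_less_or_eq order.refl sorted_wrt_iff_nth_less)

definition leg :: "nat \<Rightarrow> nat \<Rightarrow> nat" where
  "leg i j = card {i'. i < i' \<and> i' < length \<nu> \<and> j < \<nu> ! i'}"

lemma hook_eq: "hook \<nu> i j = (\<nu> ! i - j) + leg i j"
  unfolding hook_def leg_def length_filter_drop by (simp add: Suc_le_eq)

lemma leg_le: "leg i j \<le> length \<nu> - 1 - i"
proof -
  have "leg i j \<le> card {Suc i..<length \<nu>}"
    unfolding leg_def by (intro card_mono) auto
  then show ?thesis by simp
qed

lemma hook_0: "hook \<nu> i 0 = \<nu> ! i + (length \<nu> - 1 - i)"
proof -
  have "{i'. i < i' \<and> i' < length \<nu> \<and> 0 < \<nu> ! i'} = {Suc i..<length \<nu>}"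
    using nth_pos by auto
  then show ?thesis unfolding hook_eq leg_def by simp
qed

lemma leg_antimono: "j \<le> j' \<Longrightarrow> leg i j' \<le> leg i j"
  unfolding leg_def by (intro card_mono) auto

lemma leg_ge: "i < i' \<Longrightarrow> i' < length \<nu> \<Longrightarrow> j < \<nu> ! i' \<Longrightarrow> i' - i \<le> leg i j"
proof -
  assume *: "i < i'" "i' < length \<nu>" "j < \<nu> ! i'"
  have "{Suc i..i'} \<subseteq> {i'. i < i' \<and> i' < length \<nu> \<and> j < \<nu> ! i'}"
    using * nth_antimono[of _ i'] by fastforce
  then have "card {Suc i..i'} \<le> leg i j" unfolding leg_def by (intro card_mono) auto
  then show ?thesis by simp
qed

lemma leg_less: "i < i' \<Longrightarrow> i' < length \<nu> \<Longrightarrow> \<nu> ! i' \<le> j \<Longrightarrow> leg i j < i' - i"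
proof -
  assume *: "i < i'" "i' < length \<nu>" "\<nu> ! i' \<le> j"
  have "{i'. i < i' \<and> i' < length \<nu> \<and> j < \<nu> ! i'} \<subseteq> {Suc i..<i'}"
  proof
    fix k assume k: "k \<in> {i'. i < i' \<and> i' < length \<nu> \<and> j < \<nu> ! i'}"
    have "k < i'"
    proof (rule ccontr)
      assume "\<not> k < i'"
      then have "\<nu> ! k \<le> \<nu> ! i'" using nth_antimono[of i' k] k by simp
      then show False using k * by simp
    qed
    then show "k \<in> {Suc i..<i'}" using k by simp
  qed
  then have "leg i j \<le> card {Suc i..<i'}" unfolding leg_def by (intro card_mono) auto
  then show ?thesis using * by simp
qed

lemma hook_0_strict_antimono: "i < i' \<Longrightarrow> i' < length \<nu> \<Longrightarrow> hook \<nu> i' 0 < hook \<nu> i 0"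
  using hook_0[of i] hook_0[of i'] nth_antimono[of i i'] by simp

lemma hook_strict_antimono: "j < j' \<Longrightarrow> j' \<le> \<nu> ! i \<Longrightarrow> hook \<nu> i j' < hook \<nu> i j"
  using hook_eq[of i j] hook_eq[of i j'] leg_antimono[of j j' i] by simp

lemma hook_le_hook_0: "j < \<nu> ! i \<Longrightarrow> hook \<nu> i j \<le> hook \<nu> i 0"
  using hook_strict_antimono[of 0 j i] by (cases j) auto

lemma hook_pos: "j < \<nu> ! i \<Longrightarrow> 0 < hook \<nu> i j"
  using hook_eq[of i j] by simp

text \<open>The gaps of the first-column hook set below \<open>hook \<nu> i 0\<close> are exactly the numbers
  \<open>hook \<nu> i 0 - hook \<nu> i j\<close> with \<open>j < \<nu> ! i\<close>: these avoid the hook set, and both sets have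
  \<open>\<nu> ! i\<close> elements.\<close>

lemma hook_0_diff_notin_first_col_hooks:
  assumes i: "i < length \<nu>" and j: "j < \<nu> ! i"
  shows "hook \<nu> i 0 - hook \<nu> i j \<notin> first_col_hooks \<nu>"
proof
  assume "hook \<nu> i 0 - hook \<nu> i j \<in> first_col_hooks \<nu>"
  then obtain i' where i': "i' < length \<nu>" "hook \<nu> i' 0 = hook \<nu> i 0 - hook \<nu> i j"
    unfolding first_col_hooks_def by auto
  show False
  proof (cases "i < i'")
    case False
    then have "hook \<nu> i 0 \<le> hook \<nu> i' 0"
      using hook_0_strict_antimono[of i' i] i by (cases "i = i'") auto
    then show False using i' hook_pos[OF j] hook_le_hook_0[OF j] by simp
  next
    case True
    note eqs = hook_eq[of i j] leg_le[of i j] hook_0[of i] hook_0[of i'] i'(2)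
    show False
    proof (cases "j < \<nu> ! i'")
      case True
      then show False using leg_ge[of i i' j] \<open>i < i'\<close> i' eqs j by linarith
    next
      case False
      then show False using leg_less[of i i' j] \<open>i < i'\<close> i' eqs j by linarith
    qed
  qed
qed

lemma card_first_col_gaps:
  assumes i: "i < length \<nu>"
  shows "card {g. g < hook \<nu> i 0 \<and> g \<notin> first_col_hooks \<nu>} = \<nu> ! i"
proof -
  define h where "h = hook \<nu> i 0"
  have below: "first_col_hooks \<nu> \<inter> {..<h} = (\<lambda>i'. hook \<nu> i' 0) ` {Suc i..<length \<nu>}"
  proof (rule set_eqI, rule iffI)
    fix x assume "x \<in> first_col_hooks \<nu> \<inter> {..<h}"
    then obtain i' where i': "i' < length \<nu>" "x = hook \<nu> i' 0" "x < h"
      unfolding first_col_hooks_def by auto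
    then have "i < i'"
      using hook_0_strict_antimono[of i' i] i unfolding h_def by (cases i i' rule: linorder_cases) auto
    then show "x \<in> (\<lambda>i'. hook \<nu> i' 0) ` {Suc i..<length \<nu>}" using i' by auto
  next
    fix x assume "x \<in> (\<lambda>i'. hook \<nu> i' 0) ` {Suc i..<length \<nu>}"
    then show "x \<in> first_col_hooks \<nu> \<inter> {..<h}"
      unfolding h_def first_col_hooks_def using hook_0_strict_antimono[of i] by auto
  qed
  have "inj_on (\<lambda>i'. hook \<nu> i' 0) {Suc i..<length \<nu>}"
    by (rule inj_onI) (metis atLeastLessThan_iff hook_0_strict_antimono less_irrefl nat_neq_iff)
  then have "card (first_col_hooks \<nu> \<inter> {..<h}) = length \<nu> - 1 - i"
    unfolding below by (simp add: card_image)
  moreover have "{g. g < h \<and> g \<notin> first_col_hooks \<nu>} = {..<h} - (first_col_hooks \<nu> \<inter> {..<h})"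
    by auto
  ultimately have "card {g. g < h \<and> g \<notin> first_col_hooks \<nu>} = h - (length \<nu> - 1 - i)"
    by (simp add: card_Diff_subset)
  then show ?thesis unfolding h_def hook_0 by simp
qed

lemma card_hook_le_eq_card_gaps:
  assumes i: "i < length \<nu>"
  shows "card {j. j < \<nu> ! i \<and> hook \<nu> i j \<le> k}
    = card {g. g < hook \<nu> i 0 \<and> hook \<nu> i 0 \<le> g + k \<and> g \<notin> first_col_hooks \<nu>}"
proof -
  define h where "h = hook \<nu> i 0"
  define gap where "gap j = h - hook \<nu> i j" for j
  have inj: "inj_on gap {..<\<nu> ! i}"
  proof (rule inj_onI)
    fix j j' assume jj: "j \<in> {..<\<nu> ! i}" "j' \<in> {..<\<nu> ! i}" "gap j = gap j'"
    then have "hook \<nu> i j = hook \<nu> i j'"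
      using hook_le_hook_0[of j i] hook_le_hook_0[of j' i] unfolding gap_def h_def by simp
    then show "j = j'" using hook_strict_antimono[of j j' i] hook_strict_antimono[of j' j i] jj
      by (metis lessThan_iff less_imp_le_nat nat_neq_iff order.irrefl)
  qed
  have "gap ` {..<\<nu> ! i} \<subseteq> {g. g < h \<and> g \<notin> first_col_hooks \<nu>}"
    using hook_0_diff_notin_first_col_hooks[OF i] hook_pos hook_le_hook_0
    unfolding gap_def h_def by fastforce
  moreover have "card (gap ` {..<\<nu> ! i}) = \<nu> ! i" using inj by (simp add: card_image)
  ultimately have gaps: "gap ` {..<\<nu> ! i} = {g. g < h \<and> g \<notin> first_col_hooks \<nu>}"
    using card_subset_eq[of "{g. g < h \<and> g \<notin> first_col_hooks \<nu>}"] card_first_col_gaps[OF i]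
    unfolding h_def by simp
  have "gap ` {j. j < \<nu> ! i \<and> hook \<nu> i j \<le> k} = {g. g < h \<and> h \<le> g + k \<and> g \<notin> first_col_hooks \<nu>}"
  proof (rule set_eqI, rule iffI)
    fix x assume "x \<in> gap ` {j. j < \<nu> ! i \<and> hook \<nu> i j \<le> k}"
    then obtain j where j: "j < \<nu> ! i" "hook \<nu> i j \<le> k" "x = gap j" by auto
    then show "x \<in> {g. g < h \<and> h \<le> g + k \<and> g \<notin> first_col_hooks \<nu>}"
      using gaps hook_le_hook_0[OF j(1)] unfolding gap_def h_def by auto
  next
    fix x assume x: "x \<in> {g. g < h \<and> h \<le> g + k \<and> g \<notin> first_col_hooks \<nu>}"
    then obtain j where j: "j < \<nu> ! i" "x = gap j" using gaps by auto
    moreover have "h \<le> x + k" using x by simp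
    ultimately have "hook \<nu> i j \<le> k" using hook_le_hook_0[OF j(1)] unfolding gap_def h_def by linarith
    then show "x \<in> gap ` {j. j < \<nu> ! i \<and> hook \<nu> i j \<le> k}" using j by auto
  qed
  moreover have "inj_on gap {j. j < \<nu> ! i \<and> hook \<nu> i j \<le> k}"
    using inj by (rule inj_on_subset) auto
  ultimately show ?thesis
    using card_image[of gap "{j. j < \<nu> ! i \<and> hook \<nu> i j \<le> k}"] unfolding h_def by simp
qed

definition first_col_hook_list :: "nat list" where
  "first_col_hook_list = map (\<lambda>i. hook \<nu> i 0) [0..<length \<nu>]"

lemma length_first_col_hook_list: "length first_col_hook_list = length \<nu>"
  unfolding first_col_hook_list_def by simp

lemma sorted_list_of_first_col_hooks:
  "sorted_list_of_set (first_col_hooks \<nu>) = rev first_col_hook_list"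
proof (rule sorted_list_of_set_eqI)
  have "sorted_wrt (>) first_col_hook_list"
    unfolding first_col_hook_list_def sorted_wrt_iff_nth_less using hook_0_strict_antimono by simp
  then show "sorted_wrt (<) (rev first_col_hook_list)" by (simp add: sorted_wrt_rev)
qed (auto simp: first_col_hooks_def first_col_hook_list_def)

lemma rev_rows_eq_gap_counts:
  "rev (map (\<lambda>i. card {j. j < \<nu> ! i \<and> hook \<nu> i j \<le> k}) (filter (\<lambda>i. Q (hook \<nu> i 0)) [0..<length \<nu>]))
   = map (\<lambda>h. card {g. g < h \<and> h \<le> g + k \<and> g \<notin> first_col_hooks \<nu>})
       (sorted_list_of_set {h \<in> first_col_hooks \<nu>. Q h})"
proof -
  define G where "G h = card {g. g < h \<and> h \<le> g + k \<and> g \<notin> first_col_hooks \<nu>}" for h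
  have fin: "finite (first_col_hooks \<nu>)" unfolding first_col_hooks_def by simp
  have "map (\<lambda>i. card {j. j < \<nu> ! i \<and> hook \<nu> i j \<le> k}) (filter (\<lambda>i. Q (hook \<nu> i 0)) [0..<length \<nu>])
      = map (\<lambda>i. G (hook \<nu> i 0)) (filter (\<lambda>i. Q (hook \<nu> i 0)) [0..<length \<nu>])"
    using card_hook_le_eq_card_gaps unfolding G_def by (intro map_cong) auto
  also have "\<dots> = map G (filter Q first_col_hook_list)"
    unfolding first_col_hook_list_def by (simp add: filter_map comp_def)
  finally have "rev (map (\<lambda>i. card {j. j < \<nu> ! i \<and> hook \<nu> i j \<le> k}) (filter (\<lambda>i. Q (hook \<nu> i 0)) [0..<length \<nu>]))
      = map G (filter Q (sorted_list_of_set (first_col_hooks \<nu>)))"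
    unfolding sorted_list_of_first_col_hooks by (simp add: rev_filter rev_map)
  also have "filter Q (sorted_list_of_set (first_col_hooks \<nu>)) = sorted_list_of_set {h \<in> first_col_hooks \<nu>. Q h}"
    using fin by (intro sym[OF sorted_list_of_set_eqI]) (auto simp: sorted_wrt_filter)
  finally show ?thesis unfolding G_def .
qed

end

lemma first_col_hooks_inj:
  assumes "is_partition \<nu>" "is_partition \<nu>'" "first_col_hooks \<nu> = first_col_hooks \<nu>'"
  shows "\<nu> = \<nu>'"
proof -
  interpret p: young_diagram \<nu> by unfold_locales (rule assms(1))
  interpret p': young_diagram \<nu>' by unfold_locales (rule assms(2))
  have hooks: "p.first_col_hook_list = p'.first_col_hook_list"
    using p.sorted_list_of_first_col_hooks p'.sorted_list_of_first_col_hooks assms(3) by simp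
  then have len: "length \<nu> = length \<nu>'"
    by (metis p.length_first_col_hook_list p'.length_first_col_hook_list)
  show ?thesis
  proof (rule nth_equalityI[OF len])
    fix i assume i: "i < length \<nu>"
    then have "hook \<nu> i 0 = hook \<nu>' i 0"
      using arg_cong[OF hooks, of "\<lambda>xs. xs ! i"] len
      unfolding p.first_col_hook_list_def p'.first_col_hook_list_def by simp
    then show "\<nu> ! i = \<nu>' ! i" using p.hook_0[of i] p'.hook_0[of i] len by simp
  qed
qed

lemma sorted_wrt_greater_nth_add:
  "sorted_wrt (>) (xs :: nat list) \<Longrightarrow> i + d < length xs \<Longrightarrow> xs ! (i + d) + d \<le> xs ! i"
proof (induction d)
  case (Suc d)
  then have "xs ! (i + Suc d) < xs ! (i + d)"
    using sorted_wrt_nth_less[OF Suc.prems(1), of "i + d" "i + Suc d"] by simp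
  then show ?case using Suc by simp
qed simp

text \<open>A set \<open>h\<^sub>0 > h\<^sub>1 > \<dots> > h\<^sub>k\<^sub>-\<^sub>1\<close> of positive integers is the set of first-column hooks
  of the partition with parts \<open>h\<^sub>i - (k - 1 - i)\<close>.\<close>

lemma ex_first_col_hooks_eq:
  assumes "finite S" and "\<forall>s\<in>S. (0::nat) < s"
  shows "\<exists>\<nu>. is_partition \<nu> \<and> first_col_hooks \<nu> = S"
proof -
  define L where "L = rev (sorted_list_of_set S)"
  define k where "k = length L"
  have sorted: "sorted_wrt (>) L" unfolding L_def by (simp add: sorted_wrt_rev)
  have set_L: "set L = S" unfolding L_def using assms(1) by simp
  have big: "(k - 1 - i) + 1 \<le> L ! i" if i: "i < k" for i
  proof -
    have "L ! (k - 1) + (k - 1 - i) \<le> L ! i"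
      using sorted_wrt_greater_nth_add[OF sorted, of i "k - 1 - i"] i k_def by simp
    moreover have "L ! (k - 1) \<in> S" using set_L k_def i nth_mem[of "k - 1" L] by simp
    ultimately show ?thesis using assms(2) by fastforce
  qed
  define \<nu> where "\<nu> = map (\<lambda>i. L ! i - (k - 1 - i)) [0..<k]"
  have len: "length \<nu> = k" and nth: "i < k \<Longrightarrow> \<nu> ! i = L ! i - (k - 1 - i)" for i
    unfolding \<nu>_def by simp_all
  have partition: "is_partition \<nu>"
    unfolding is_partition_def
  proof
    show "sorted_wrt (\<ge>) \<nu>" unfolding sorted_wrt_iff_nth_less len
    proof (intro allI impI)
      fix i j assume ij: "i < j" "j < k"
      have "L ! j + (j - i) \<le> L ! i"
        using sorted_wrt_greater_nth_add[OF sorted, of i "j - i"] ij k_def by simp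
      then show "\<nu> ! j \<le> \<nu> ! i" using nth[of i] nth[of j] big[of j] ij by simp
    qed
    show "\<forall>p\<in>set \<nu>. 0 < p" using nth big len by (fastforce simp: in_set_conv_nth)
  qed
  interpret young_diagram \<nu> by unfold_locales (rule partition)
  have "hook \<nu> i 0 = L ! i" if "i < k" for i using that hook_0 nth big len by fastforce
  then have "first_col_hooks \<nu> = set L"
    unfolding first_col_hooks_def using len by (auto simp: in_set_conv_nth k_def) metis
  then show ?thesis using partition set_L by blast
qed

lemma f_map_spec:
  assumes "finite (region_levels a b \<pi>)" and "\<forall>r\<in>region_levels a b \<pi>. 0 < r"
  shows "is_partition (f_map a b \<pi>) \<and> int ` first_col_hooks (f_map a b \<pi>) = region_levels a b \<pi>"
proof -
  define R where "R = region_levels a b \<pi>"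
  obtain \<nu> where \<nu>: "is_partition \<nu>" "first_col_hooks \<nu> = nat ` R"
    using ex_first_col_hooks_eq[of "nat ` R"] assms unfolding R_def by auto
  have "int ` nat ` R = R" using assms(2) unfolding R_def by (force simp: image_image)
  then have spec: "is_partition \<nu> \<and> int ` first_col_hooks \<nu> = R" using \<nu> by simp
  have "\<exists>!\<nu>. is_partition \<nu> \<and> int ` first_col_hooks \<nu> = R"
  proof (rule ex1I[of _ \<nu>])
    fix \<nu>' assume \<nu>': "is_partition \<nu>' \<and> int ` first_col_hooks \<nu>' = R"
    then have "int ` first_col_hooks \<nu>' = int ` first_col_hooks \<nu>" using spec by simp
    then have "first_col_hooks \<nu>' = first_col_hooks \<nu>" by (simp add: inj_image_eq_iff)
    then show "\<nu>' = \<nu>" using spec \<nu>' first_col_hooks_inj by blast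
  qed (rule spec)
  then show ?thesis unfolding f_map_def R_def by (rule theI')
qed

section \<open>The region below the path\<close>

lemma int_dvd_abs_less_imp_zero: "(d::int) dvd x \<Longrightarrow> \<bar>x\<bar> < d \<Longrightarrow> x = 0"
proof (rule ccontr)
  assume *: "d dvd x" "\<bar>x\<bar> < d" "x \<noteq> 0"
  then have "\<bar>d\<bar> \<le> \<bar>x\<bar>" using dvd_imp_le_int by blast
  then show False using *(2) by linarith
qed

text \<open>If \<open>M\<close> is a set of nonnegative representatives of all residues modulo \<open>b\<close> containing \<open>0\<close>,
  then every residue class meets the window \<open>[h - b, h)\<close> once; its point there is a gap of the set
  of positive translates \<open>m - b t\<close> (\<open>t \<ge> 1\<close>) exactly when it is the representative in \<open>M\<close>.\<close>

lemma card_window_avoiding_translates: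
  fixes M :: "int set" and b h :: int
  assumes b: "0 < b"
    and residues: "\<And>r. 0 \<le> r \<Longrightarrow> r < b \<Longrightarrow> \<exists>!m. m \<in> M \<and> m mod b = r"
    and nonneg: "\<And>m. m \<in> M \<Longrightarrow> 0 \<le> m" and zero: "0 \<in> M"
  shows "card {g. 0 \<le> g \<and> g < h \<and> h \<le> g + b \<and>
            g \<notin> {m - b * t | m t. m \<in> M \<and> 1 \<le> t \<and> 0 < m - b * t}}
         = card {m \<in> M. m < h}"
proof -
  define R where "R = {m - b * t | m t. m \<in> M \<and> 1 \<le> t \<and> 0 < m - b * t}"
  define A where "A = {g. 0 \<le> g \<and> g < h \<and> h \<le> g + b \<and> g \<notin> R}"
  define B where "B = {m \<in> M. m < h}"
  have res_eq: "m = m'" if "m \<in> M" "m' \<in> M" "m mod b = m' mod b" for m m'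
    using residues[of "m mod b"] that b by auto
  have inj_A: "inj_on (\<lambda>g. g mod b) A"
  proof (rule inj_onI)
    fix g g' assume g: "g \<in> A" "g' \<in> A" "g mod b = g' mod b"
    then have "b dvd g - g'" by (simp add: mod_eq_dvd_iff)
    moreover have "\<bar>g - g'\<bar> < b" using g unfolding A_def by auto
    ultimately show "g = g'" using int_dvd_abs_less_imp_zero by fastforce
  qed
  have inj_B: "inj_on (\<lambda>g. g mod b) B"
    unfolding B_def by (rule inj_onI) (auto intro: res_eq)
  have "(\<lambda>g. g mod b) ` A \<subseteq> (\<lambda>g. g mod b) ` B"
  proof
    fix r assume "r \<in> (\<lambda>g. g mod b) ` A"
    then obtain g where g: "g \<in> A" "r = g mod b" by auto
    obtain m where m: "m \<in> M" "m mod b = r" using residues[of r] g b by auto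
    have "m \<le> g"
    proof (rule ccontr)
      assume "\<not> m \<le> g"
      have "b dvd m - g" using m g by (simp add: mod_eq_dvd_iff)
      then obtain t where "m - g = b * t" by (auto elim: dvdE)
      moreover from this have "0 < b * t" using \<open>\<not> m \<le> g\<close> by simp
      then have "1 \<le> t" using b by (simp add: zero_less_mult_iff)
      ultimately have t: "m - g = b * t" "1 \<le> t" by simp_all
      show False
      proof (cases "g = 0")
        case True
        then have "m = 0" using res_eq[OF m(1) zero] m g by simp
        then show False using \<open>\<not> m \<le> g\<close> True by simp
      next
        case False
        then have "g \<in> R" unfolding R_def using g m t unfolding A_def
          by (intro CollectI exI[of _ m] exI[of _ t]) simp
        then show False using g unfolding A_def by simp
      qed
    qed
    then have "m \<in> B" using g m unfolding A_def B_def by simp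
    then show "r \<in> (\<lambda>g. g mod b) ` B" using m by auto
  qed
  moreover have "(\<lambda>g. g mod b) ` B \<subseteq> (\<lambda>g. g mod b) ` A"
  proof
    fix r assume "r \<in> (\<lambda>g. g mod b) ` B"
    then obtain m where m: "m \<in> M" "m < h" "r = m mod b" unfolding B_def by auto
    define q where "q = (h - 1 - m) div b"
    define g where "g = m + b * q"
    have q: "0 \<le> q" unfolding q_def using m b by (simp add: pos_imp_zdiv_nonneg_iff)
    have div: "b * q + (h - 1 - m) mod b = h - 1 - m" "0 \<le> (h - 1 - m) mod b" "(h - 1 - m) mod b < b"
      unfolding q_def using b by simp_all
    have "g \<in> A" unfolding A_def
    proof (intro CollectI conjI)
      show "0 \<le> g" unfolding g_def using nonneg[OF m(1)] q b by simp
      show "g < h" "h \<le> g + b" unfolding g_def using div by linarith+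
      show "g \<notin> R"
      proof
        assume "g \<in> R"
        then obtain m' t where mt: "g = m' - b * t" "m' \<in> M" "1 \<le> t" unfolding R_def by blast
        then have "m' = g + b * t" by simp
        then have "m' mod b = g mod b" by simp
        then have "m' = m" using res_eq[OF mt(2) m(1)] unfolding g_def by simp
        then have "b * q = - b * t" using mt unfolding g_def by simp
        then have "q = - t" using mult_cancel_left[of b q "- t"] b by simp
        then show False using q mt by simp
      qed
    qed
    moreover have "g mod b = r" unfolding g_def m by simp
    ultimately show "r \<in> (\<lambda>g. g mod b) ` A" by blast
  qed
  ultimately have "card A = card B"
    using card_image[OF inj_A] card_image[OF inj_B] by simp
  then show ?thesis unfolding A_def B_def R_def .
qed

context coprime_dyck_word
begin

text \<open>Both the square east of a north step and the square north of an east step starting at a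
  point of level \<open>l\<close> have level \<open>l - a\<close>.\<close>

lemma sqlev_take: "sqlev a b (countE (take i w)) (countN (take i w)) = lev i - int a"
  unfolding sqlev_def ptlev_def lev_eq by (simp add: algebra_simps)

definition E_square_levels :: "int set" where
  "E_square_levels = (\<lambda>l. l - int a) ` E_levels"

definition region :: "int set" where
  "region = {sqlev a b x y | x y. x < b \<and> y < a \<and> 0 < sqlev a b x y \<and>
      (\<exists>x'. (x', y) \<in> nsteps w \<and> x' \<le> x)}"

lemma E_square_levels_eq: "E_square_levels = (\<lambda>j. lev j - int a) ` {j. j < length w \<and> w ! j = E}"
  unfolding E_square_levels_def E_levels_def levels_letter_eq by (simp add: image_image)

lemma E_square_levels_nonneg: "m \<in> E_square_levels \<Longrightarrow> 0 \<le> m"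
  unfolding E_square_levels_eq using lev_ge_if_E by fastforce

lemma east_square_levels_eq: "{sqlev a b x y | x y. (x, y) \<in> nsteps w} = (\<lambda>l. l - int a) ` N_levels"
proof -
  have "{sqlev a b x y | x y. (x, y) \<in> nsteps w}
      = (\<lambda>i. sqlev a b (countE (take i w)) (countN (take i w))) ` {i. i < length w \<and> w ! i = N}"
    unfolding nsteps_def by blast
  also have "\<dots> = (\<lambda>l. l - int a) ` N_levels"
    unfolding N_levels_def levels_letter_eq sqlev_take by (simp add: image_image)
  finally show ?thesis .
qed

lemma region_subset:
  "region \<subseteq> {m - int b * t | m t. m \<in> E_square_levels \<and> 1 \<le> t \<and> 0 < m - int b * t}"
proof
  fix z assume "z \<in> region"
  then obtain x y i where z: "z = sqlev a b x y" and x: "x < b" and pos: "0 < z"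
    and i: "i < length w" "w ! i = N" "y = countN (take i w)" "countE (take i w) \<le> x"
    unfolding region_def nsteps_def by blast
  obtain i' where i': "i' < length w" "w ! i' = E" "countE (take i' w) = x"
    using ex_countE_take_eq[of x w] x countE_w by auto
  have "i < i'"
  proof (rule ccontr)
    assume "\<not> i < i'"
    then have "i' < i" using i i' by (metis linorder_neqE_nat step.distinct(1))
    then show False using countE_take_strict_mono[of i' i w] i i' by simp
  qed
  then have y: "y < countN (take i' w)" using countN_take_strict_mono[of i i' w] i i' by simp
  define t where "t = int (countN (take i' w)) - int y"
  have "lev i' - int a \<in> E_square_levels" unfolding E_square_levels_eq using i' by auto
  moreover have "z = (lev i' - int a) - int b * t"
    unfolding z t_def sqlev_def ptlev_def lev_eq using i' by (simp add: algebra_simps)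
  moreover have "1 \<le> t" using y t_def by simp
  ultimately show "z \<in> {m - int b * t | m t. m \<in> E_square_levels \<and> 1 \<le> t \<and> 0 < m - int b * t}"
    using pos by blast
qed

lemma subset_region:
  "{m - int b * t | m t. m \<in> E_square_levels \<and> 1 \<le> t \<and> 0 < m - int b * t} \<subseteq> region"
proof
  fix z assume "z \<in> {m - int b * t | m t. m \<in> E_square_levels \<and> 1 \<le> t \<and> 0 < m - int b * t}"
  then obtain m t where z: "z = m - int b * t" and m: "m \<in> E_square_levels" and t: "1 \<le> t"
    and pos: "0 < z" by blast
  obtain i' where i': "i' < length w" "w ! i' = E" "m = lev i' - int a"
    using m unfolding E_square_levels_eq by auto
  define x e where "x = countE (take i' w)" and "e = countN (take i' w)"
  have m_eq: "m = int b * int e - int a * (int x + 1)"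
    using i' unfolding x_def e_def lev_eq by (simp add: algebra_simps)
  have "int b * t < int b * int e" using pos z m_eq
    by (smt (verit) mult_nonneg_nonneg of_nat_0_le_iff)
  then have te: "t < int e" using b_pos by simp
  define y where "y = e - nat t"
  have y: "int y = int e - t" unfolding y_def using te t by simp
  have x: "x < b" unfolding x_def using countE_take_less[of i' w] i' countE_w by simp
  have "e \<le> a" unfolding e_def using countN_take_le[of i' w] countN_w by simp
  then have ya: "y < a" using y t by simp
  have "int e = int y + t" using y by simp
  then have zs: "z = sqlev a b x y" unfolding z m_eq sqlev_def ptlev_def by (simp add: algebra_simps)
  obtain i where i: "i < length w" "w ! i = N" "countN (take i w) = y"
    using ex_countN_take_eq[of y w] ya countN_w by auto
  have "i < i'"
  proof (rule ccontr)
    assume "\<not> i < i'"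
    then have "i' < i" using i i' by (metis linorder_neqE_nat step.distinct(1))
    then have "countN (take i' w) \<le> countN (take i w)" using countN_take_mono by simp
    then show False using i e_def y t by simp
  qed
  then have "countE (take i w) \<le> x" unfolding x_def using countE_take_mono by simp
  moreover have "(countE (take i w), y) \<in> nsteps w" unfolding nsteps_def using i by auto
  ultimately show "z \<in> region" unfolding region_def using zs x ya pos by blast
qed

lemma region_eq: "region = {m - int b * t | m t. m \<in> E_square_levels \<and> 1 \<le> t \<and> 0 < m - int b * t}"
  using region_subset subset_region by (rule antisym)

lemma finite_region: "finite region"
proof -
  have "region \<subseteq> (\<lambda>(x, y). sqlev a b x y) ` ({..<b} \<times> {..<a})" unfolding region_def by auto
  then show ?thesis by (rule finite_subset) simp
qed

lemma region_pos: "r \<in> region \<Longrightarrow> 0 < r"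
  unfolding region_def by auto

text \<open>The \<open>b\<close> east steps start at pairwise different columns, so by coprimality their square
  levels are pairwise incongruent modulo \<open>b\<close>.\<close>

lemma inj_on_mod_E_square_levels: "inj_on (\<lambda>m. m mod int b) E_square_levels"
proof (rule inj_onI)
  fix m m' assume mm: "m \<in> E_square_levels" "m' \<in> E_square_levels" "m mod int b = m' mod int b"
  obtain j j' where j: "j < length w" "w ! j = E" "m = lev j - int a"
    and j': "j' < length w" "w ! j' = E" "m' = lev j' - int a"
    using mm(1,2) unfolding E_square_levels_eq by auto
  define x where "x = int (countE (take j w)) - int (countE (take j' w))"
  define d where "d = int (countN (take j w)) - int (countN (take j' w))"
  have "int a * x = int b * d - (m - m')"
    unfolding j j' lev_eq x_def d_def by (simp add: algebra_simps)
  moreover have "int b dvd m - m'" using mm(3) by (simp add: mod_eq_dvd_iff)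
  ultimately have "int b dvd int a * x" by (metis dvd_diff dvd_triv_left)
  moreover have "coprime (int b) (int a)" using coprime by (simp add: coprime_commute)
  ultimately have "int b dvd x" using coprime_dvd_mult_right_iff by blast
  moreover have "\<bar>x\<bar> < int b"
    using countE_take_less[of j w] countE_take_less[of j' w] j j' countE_w unfolding x_def by simp
  ultimately have "x = 0" using int_dvd_abs_less_imp_zero by blast
  then have "j = j'"
    using countE_take_strict_mono[of j j' w] countE_take_strict_mono[of j' j w] j j' x_def
    by (cases j j' rule: linorder_cases) simp_all
  then show "m = m'" using j j' by simp
qed

lemma E_square_levels_residue: "0 \<le> r \<Longrightarrow> r < int b \<Longrightarrow> \<exists>!m. m \<in> E_square_levels \<and> m mod int b = r"
proof -
  assume r: "0 \<le> r" "r < int b"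
  have "card E_square_levels = b"
    unfolding E_square_levels_def using card_E_levels by (simp add: card_image inj_on_def)
  then have "card ((\<lambda>m. m mod int b) ` E_square_levels) = card {0..<int b}"
    using card_image[OF inj_on_mod_E_square_levels] by simp
  moreover have "(\<lambda>m. m mod int b) ` E_square_levels \<subseteq> {0..<int b}" using b_pos by auto
  ultimately have "(\<lambda>m. m mod int b) ` E_square_levels = {0..<int b}"
    by (intro card_subset_eq) simp_all
  then obtain m where "m \<in> E_square_levels" "m mod int b = r" using r by (metis atLeastLessThan_iff imageE)
  then show ?thesis using inj_on_mod_E_square_levels by (auto simp: inj_on_def)
qed

text \<open>The last east step runs along the top side of the rectangle, so its square has level \<open>0\<close>.\<close>

lemma zero_in_E_square_levels: "0 \<in> E_square_levels"
proof -
  obtain j where j: "j < length w" "w ! j = E" "countE (take j w) = b - 1"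
    using ex_countE_take_eq[of "b - 1" w] countE_w b_pos by auto
  define e where "e = countN (take j w)"
  have m: "lev j - int a \<in> E_square_levels" unfolding E_square_levels_eq using j by auto
  have m_eq: "lev j - int a = int b * int e - int a * int b"
    using j b_pos unfolding lev_eq e_def by (simp add: of_nat_diff algebra_simps)
  have "int a * int b \<le> int e * int b" using E_square_levels_nonneg[OF m] m_eq by (simp add: algebra_simps)
  then have "a \<le> e" using b_pos by simp
  moreover have "e \<le> a" unfolding e_def using countN_take_le[of j w] countN_w by simp
  ultimately show ?thesis using m m_eq by simp
qed

lemma card_window_avoiding_region:
  "card {g. 0 \<le> g \<and> g < h \<and> h \<le> g + int b \<and> g \<notin> region} = card {m \<in> E_square_levels. m < h}"
  unfolding region_eq
  using b_pos E_square_levels_residue E_square_levels_nonneg zero_in_E_square_levels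
  by (intro card_window_avoiding_translates) auto

section \<open>The rows of zeta\<close>

lemma N_level_sub_in_region:
  assumes l: "l \<in> N_levels" "int a < l"
  shows "l - int a \<in> region"
proof -
  obtain i where i: "i < length w" "w ! i = N" "l = lev i"
    using l(1) unfolding N_levels_def levels_letter_eq by auto
  define x y where "x = countE (take i w)" and "y = countN (take i w)"
  have sq: "sqlev a b x y = l - int a" unfolding x_def y_def using sqlev_take i by simp
  have y: "y < a" unfolding y_def using countN_take_less[of i w] i countN_w by simp
  have pos: "0 < sqlev a b x y" using sq l by simp
  then have "int a * (int x + 1) < int b * int y" unfolding sqlev_def ptlev_def by (simp add: algebra_simps)
  also have "\<dots> \<le> int b * int a" using y by (intro mult_left_mono) simp_all
  finally have "int x + 1 < int b" using a_pos by (simp add: mult.commute mult_less_cancel_left)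
  then have "x < b" by simp
  moreover have "(x, y) \<in> nsteps w" unfolding nsteps_def x_def y_def using i by auto
  ultimately show ?thesis unfolding region_def sq[symmetric] using y pos by blast
qed

lemma int_a_notin_N_levels: "int a \<notin> N_levels"
proof
  assume "int a \<in> N_levels"
  then obtain i where i: "i < length w" "w ! i = N" "int a = lev i"
    unfolding N_levels_def levels_letter_eq by auto
  define x y where "x = countE (take i w)" and "y = countN (take i w)"
  have y: "y < a" unfolding y_def using countN_take_less[of i w] i countN_w by simp
  have "int (b * y) = int (a * (x + 1))" using i(3) unfolding lev_eq x_def y_def by (simp add: algebra_simps)
  then have e: "b * y = a * (x + 1)" by (simp only: of_nat_eq_iff)
  then have "a dvd b * y" by simp
  then have "a dvd y" using coprime coprime_dvd_mult_right_iff by blast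
  then have "y = 0" using y by (metis dvd_imp_le not_le neq0_conv)
  then show False using e a_pos by simp
qed

lemma E_below_eq: "E_below l = card {m \<in> E_square_levels. m < l - int a}"
proof -
  have "{m \<in> E_square_levels. m < l - int a} = (\<lambda>x. x - int a) ` {l' \<in> E_levels. l' < l}"
    unfolding E_square_levels_def by auto
  then show ?thesis unfolding E_below_def by (simp add: card_image inj_on_def)
qed

lemma E_below_eq_0:
  assumes "l \<le> int a"
  shows "E_below l = 0"
proof -
  have "{m \<in> E_square_levels. m < l - int a} = {}" using E_square_levels_nonneg assms by fastforce
  then show ?thesis unfolding E_below_eq by (simp del: Collect_empty_eq)
qed

context
  fixes \<nu> :: "nat list"
  assumes hooks_region: "int ` first_col_hooks \<nu> = region"
begin

lemma in_first_col_hooks_iff: "h \<in> first_col_hooks \<nu> \<longleftrightarrow> int h \<in> region"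
proof -
  have "int h \<in> int ` first_col_hooks \<nu> \<longleftrightarrow> h \<in> first_col_hooks \<nu>" by auto
  then show ?thesis using hooks_region by simp
qed

lemma first_col_hooks_east_squares:
  "{h \<in> first_col_hooks \<nu>. int h \<in> (\<lambda>l. l - int a) ` N_levels}
   = (\<lambda>l. nat (l - int a)) ` {l \<in> N_levels. int a < l}"
proof (rule set_eqI, rule iffI)
  fix h assume h: "h \<in> {h \<in> first_col_hooks \<nu>. int h \<in> (\<lambda>l. l - int a) ` N_levels}"
  then obtain l where l: "l \<in> N_levels" "int h = l - int a" by auto
  moreover have "0 < int h" using h region_pos in_first_col_hooks_iff by blast
  ultimately show "h \<in> (\<lambda>l. nat (l - int a)) ` {l \<in> N_levels. int a < l}"
    by (intro image_eqI[of _ _ l]) auto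
next
  fix h assume "h \<in> (\<lambda>l. nat (l - int a)) ` {l \<in> N_levels. int a < l}"
  then obtain l where l: "l \<in> N_levels" "int a < l" "h = nat (l - int a)" by auto
  then have "int h = l - int a" by simp
  then show "h \<in> {h \<in> first_col_hooks \<nu>. int h \<in> (\<lambda>l. l - int a) ` N_levels}"
    using N_level_sub_in_region[OF l(1,2)] in_first_col_hooks_iff l(1) by auto
qed

lemma card_first_col_gaps_window:
  assumes l: "int a < l"
  shows "card {g. g < nat (l - int a) \<and> nat (l - int a) \<le> g + b \<and> g \<notin> first_col_hooks \<nu>} = E_below l"
proof -
  define h where "h = nat (l - int a)"
  have h: "int h = l - int a" using l unfolding h_def by simp
  have "int ` {g. g < h \<and> h \<le> g + b \<and> g \<notin> first_col_hooks \<nu>}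
      = {g. 0 \<le> g \<and> g < int h \<and> int h \<le> g + int b \<and> g \<notin> region}"
  proof (rule set_eqI, rule iffI)
    fix x assume x: "x \<in> {g. 0 \<le> g \<and> g < int h \<and> int h \<le> g + int b \<and> g \<notin> region}"
    then have "nat x \<in> {g. g < h \<and> h \<le> g + b \<and> g \<notin> first_col_hooks \<nu>}"
      using in_first_col_hooks_iff by auto
    moreover have "x = int (nat x)" using x by simp
    ultimately show "x \<in> int ` {g. g < h \<and> h \<le> g + b \<and> g \<notin> first_col_hooks \<nu>}" by blast
  qed (auto simp: in_first_col_hooks_iff)
  then have "card {g. g < h \<and> h \<le> g + b \<and> g \<notin> first_col_hooks \<nu>}
      = card {g. 0 \<le> g \<and> g < int h \<and> int h \<le> g + int b \<and> g \<notin> region}"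
    using card_image[of int "{g. g < h \<and> h \<le> g + b \<and> g \<notin> first_col_hooks \<nu>}"] by simp
  also have "\<dots> = E_below l"
    unfolding card_window_avoiding_region E_below_eq h ..
  finally show ?thesis unfolding h_def .
qed

lemma rev_zeta_rows:
  assumes "is_partition \<nu>"
  shows "rev (map (\<lambda>i. card {j. j < \<nu> ! i \<and> hook \<nu> i j \<le> b})
      (filter (\<lambda>i. int (hook \<nu> i 0) \<in> (\<lambda>l. l - int a) ` N_levels) [0..<length \<nu>]))
    = map E_below (sorted_list_of_set {l \<in> N_levels. int a < l})"
proof -
  interpret young_diagram \<nu> by unfold_locales (rule assms)
  have "sorted_list_of_set ((\<lambda>l. nat (l - int a)) ` {l \<in> N_levels. int a < l})
      = map (\<lambda>l. nat (l - int a)) (sorted_list_of_set {l \<in> N_levels. int a < l})"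
    by (rule sorted_list_of_set_image_strict_mono) (auto simp: nat_less_eq_zless)
  then show ?thesis
    using rev_rows_eq_gap_counts[of b "\<lambda>h. int h \<in> (\<lambda>l. l - int a) ` N_levels"]
      card_first_col_gaps_window
    unfolding first_col_hooks_east_squares by simp
qed

end

lemma E_below_N_levels_padded:
  "replicate (a - card {l \<in> N_levels. int a < l}) 0 @ map E_below (sorted_list_of_set {l \<in> N_levels. int a < l})
   = map E_below (sorted_list_of_set N_levels)"
proof -
  define low high where "low = {l \<in> N_levels. l < int a}" and "high = {l \<in> N_levels. int a < l}"
  have split: "N_levels = low \<union> high"
  proof (rule set_eqI)
    fix l show "l \<in> N_levels \<longleftrightarrow> l \<in> low \<union> high"
      using int_a_notin_N_levels unfolding low_def high_def
      by (cases "l < int a"; cases "l = int a") auto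
  qed
  have fin: "finite low" "finite high" unfolding low_def high_def by simp_all
  have "low \<inter> high = {}" unfolding low_def high_def by auto
  then have "card low + card high = a"
    using card_Un_disjoint[OF fin] split card_N_levels by simp
  moreover have "sorted_list_of_set N_levels = sorted_list_of_set low @ sorted_list_of_set high"
  proof (rule sorted_list_of_set_eqI)
    show "sorted_wrt (<) (sorted_list_of_set low @ sorted_list_of_set high)"
      unfolding sorted_wrt_append using fin unfolding low_def high_def by auto
    show "set (sorted_list_of_set low @ sorted_list_of_set high) = N_levels"
      using fin split by simp
  qed simp
  moreover have "map E_below (sorted_list_of_set low) = replicate (card low) 0"
  proof -
    have "map E_below (sorted_list_of_set low) = map (\<lambda>_. 0) (sorted_list_of_set low)"
      unfolding low_def by (intro map_cong) (auto intro: E_below_eq_0)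
    then show ?thesis by (simp add: map_replicate_const)
  qed
  ultimately show ?thesis unfolding high_def by simp
qed

end

theorem mainTheorem5:
  fixes a b :: nat and \<pi> :: "nat list"
  assumes "0 < a" and "0 < b" and "gcd a b = 1"
    and "\<pi> \<in> Dset a b"
  shows "word a b (zeta a b \<pi>) = sweep a b (rev (word a b \<pi>))"
proof -
  have \<pi>: "is_partition \<pi>" "fits a b \<pi>"
    and nonneg: "\<forall>i \<le> length (word a b \<pi>). 0 \<le> wlev a b (take i (word a b \<pi>))"
    using assms(4) unfolding Dset_def by auto
  interpret coprime_dyck_word a b "word a b \<pi>"
    using assms(1-3) countN_countE_word[OF \<pi>] nonneg
    by unfold_locales (simp_all add: coprime_iff_gcd_eq_1)
  define \<nu> where "\<nu> = f_map a b \<pi>"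
  define high where "high = {l \<in> N_levels. int a < l}"
  have "region_levels a b \<pi> = region"
    unfolding region_levels_def region_def ..
  then have \<nu>: "is_partition \<nu>" "int ` first_col_hooks \<nu> = region"
    using f_map_spec[of a b \<pi>] finite_region region_pos unfolding \<nu>_def by auto
  have rev_zeta: "rev (zeta a b \<pi>) = map E_below (sorted_list_of_set high)"
    unfolding zeta_def Let_def \<nu>_def[symmetric] east_levels_def east_square_levels_eq high_def
    by (rule rev_zeta_rows[OF \<nu>(2,1)])
  then have "length (zeta a b \<pi>) = card high"
    by (metis length_map length_rev length_sorted_list_of_set)
  then have "replicate (a - length (zeta a b \<pi>)) 0 @ rev (zeta a b \<pi>)
      = map E_below (sorted_list_of_set N_levels)"
    using rev_zeta E_below_N_levels_padded unfolding high_def by simp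
  then show ?thesis
    unfolding word_def[of a b "zeta a b \<pi>"] Let_def sweep_rev_eq_word by simp
qed

end
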